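(* Fix an integer $k\ge0$. For real numbers $2\le y\le x$, $$\Phi_k(x,y)=\Psi(x,P_k)+O\left(\frac{x(\log x)^{2k}}{y}\right),$$ where the implied constant depends only on $k$.
   Context: $\phi$ is Euler's function, $\phi_0(n)=n$, $\phi_{k+1}(n)=\phi(\phi_k(n))$. $\Phi_k(x,y)=\#\{n\le x:\ p\mid\phi_k(n)\Rightarrow p\le y\}$ ($p$ prime). For a set $P$ of primes, $\Psi(x,P)=\#\{n\le x:\ p\mid n\Rightarrow p\in P\}$. The sets of primes $P_k$ are defined by $P_0=\{p\le y\}$ and $P_{k+1}=\{p\le x \text{ prime}:\ q\mid p-1\Rightarrow q\in P_k\}$. *)

theory Defs
  imports "HOL-Number_Theory.Number_Theory"
begin

definition iter_totient :: "nat \<Rightarrow> nat \<Rightarrow> nat" where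
  "iter_totient k n = (totient ^^ k) n"

definition Phi_count :: "nat \<Rightarrow> real \<Rightarrow> real \<Rightarrow> nat" where
  "Phi_count k x y = card {n::nat. 1 \<le> n \<and> real n \<le> x \<and>
      (\<forall>p. prime p \<and> p dvd iter_totient k n \<longrightarrow> real p \<le> y)}"

definition Psi_count :: "real \<Rightarrow> nat set \<Rightarrow> nat" where
  "Psi_count x P = card {n::nat. 1 \<le> n \<and> real n \<le> x \<and>
      (\<forall>p. prime p \<and> p dvd n \<longrightarrow> p \<in> P)}"

fun P_set :: "real \<Rightarrow> real \<Rightarrow> nat \<Rightarrow> nat set" where
  "P_set x y 0 = {p. prime p \<and> real p \<le> y}"
| "P_set x y (Suc k) = {p. prime p \<and> real p \<le> x \<and>
      (\<forall>q. prime q \<and> q dvd (p - 1) \<longrightarrow> q \<in> P_set x y k)}"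

end

theory Submission
  imports Defs "HOL-Analysis.Harmonic_Numbers"
begin

(* If p is a prime factor of n then p - 1 divides phi(n); by induction on k, every n counted
   by Phi_k(x,y) is counted by Psi(x,P_k). Conversely, a prime q dividing phi(m) either satisfies
   q^2 | m or divides p - 1 for a prime p | m. Hence if all prime factors of n lie in P_k but
   phi_k(n) has a prime factor q > y, then q^2 | phi_i(n) for some i < k and some prime q > y.
   To count such n <= x, trace a divisor q or q q' of phi_(j+1)(n) back to a divisor of phi_j(n)
   built from q, q' and primes p = 1 (mod q); since the sum of 1/p over primes p <= x with
   p = 1 (mod d) is at most H/d, H = 1 + 1/2 + ... + 1/x, this gives
   #{n <= x : q q' | phi_j(n)} <= (5 H^2)^j x / (q q'), and summing q^-2 over q > y
   gives the error term k (5 H^2)^k x / y = O(x (log x)^(2k) / y). *)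

section \<open>Prime divisors of the totient\<close>

lemma prime_not_dvd_pred:
  fixes p :: nat
  assumes "prime p"
  shows "\<not> p dvd p - 1"
  using prime_gt_1_nat[OF assms] dvd_imp_le[of p "p - 1"] by auto

lemma totient_eq_prod_prime_power_factors:
  fixes m :: nat
  assumes "m > 0"
  shows "totient m = (\<Prod>p\<in>prime_factors m. totient (p ^ multiplicity p m))"
  unfolding totient_formula1[OF assms]
  by (intro prod.cong refl) (simp add: totient_prime_power prime_factors_multiplicity)

lemma prime_dvd_totient_prime_power:
  fixes p q :: nat
  assumes p: "prime p" and q: "prime q" and dvd: "q dvd totient (p ^ a)"
  shows "(q = p \<and> p\<^sup>2 dvd p ^ a) \<or> q dvd p - 1"
proof (cases "q dvd p - 1")
  case False
  have "a > 0"
    using dvd q by (cases a) auto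
  then have "q dvd p ^ (a - 1)"
    using dvd False p q by (simp add: totient_prime_power prime_dvd_mult_iff)
  then have "q = p" "a - 1 > 0"
    using p q by (auto simp: prime_elem_dvd_power_iff primes_dvd_imp_eq)
  then show ?thesis
    by (simp add: le_imp_power_dvd)
qed simp

lemma prime_pair_dvd_totient_prime_power:
  fixes p q q' :: nat
  assumes p: "prime p" and q: "prime q" "prime q'" and dvd: "q * q' dvd totient (p ^ a)"
  shows "(p\<^sup>2 dvd p ^ a \<and> (q = p \<or> q dvd p - 1) \<and> (q' = p \<or> q' dvd p - 1))
    \<or> q * q' dvd p - 1"
proof -
  have q_cases: "(q = p \<and> p\<^sup>2 dvd p ^ a) \<or> q dvd p - 1"
    using prime_dvd_totient_prime_power[OF p q(1)] dvd dvd_mult_left by blast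
  have q'_cases: "(q' = p \<and> p\<^sup>2 dvd p ^ a) \<or> q' dvd p - 1"
    using prime_dvd_totient_prime_power[OF p q(2)] dvd dvd_mult_right by blast
  show ?thesis
  proof (cases "q = p \<or> q' = p")
    case True
    then have "p\<^sup>2 dvd p ^ a"
      using q_cases q'_cases prime_not_dvd_pred[OF p] by blast
    then show ?thesis
      using q_cases q'_cases by blast
  next
    case False
    have "a > 0"
      using dvd q prime_gt_1_nat[OF q(1)] by (cases a) auto
    have "coprime (q * q') (p ^ (a - 1))"
      using False p q by (simp add: primes_coprime)
    then show ?thesis
      using dvd \<open>a > 0\<close> p by (simp add: totient_prime_power coprime_dvd_mult_right_iff)
  qed
qed

lemma prime_pair_dvd_mult:
  fixes q q' a b :: nat
  assumes q: "prime q" "prime q'" and dvd: "q * q' dvd a * b"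
  shows "q * q' dvd a \<or> q * q' dvd b \<or> (q dvd a \<and> q' dvd b) \<or> (q' dvd a \<and> q dvd b)"
proof -
  have "q dvd a \<or> q dvd b"
    using dvd q(1) dvd_mult_left prime_dvd_mult_iff by blast
  then show ?thesis
  proof
    assume "q dvd a"
    then obtain a' where a': "a = q * a'" ..
    then have "q' dvd a' * b"
      using dvd q(1) by (simp add: mult.assoc prime_gt_0_nat)
    then show ?thesis
      using a' q(2) by (auto simp: prime_dvd_mult_iff)
  next
    assume "q dvd b"
    then obtain b' where b': "b = q * b'" ..
    then have "q' dvd a * b'"
      using dvd q(1) by (simp add: mult.left_commute prime_gt_0_nat)
    then show ?thesis
      using b' q(2) by (auto simp: prime_dvd_mult_iff mult.commute)
  qed
qed

lemma prime_pair_dvd_prod: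
  fixes f :: "'a \<Rightarrow> nat"
  assumes "finite A" and q: "prime q" "prime q'" and "q * q' dvd prod f A"
  shows "(\<exists>x\<in>A. q * q' dvd f x) \<or> (\<exists>x\<in>A. \<exists>x'\<in>A. x \<noteq> x' \<and> q dvd f x \<and> q' dvd f x')"
  using assms(1,4)
proof (induction A rule: finite_induct)
  case empty
  then show ?case
    using q by (auto simp: prime_gt_1_nat)
next
  case (insert x A)
  have "q * q' dvd f x * prod f A"
    using insert by simp
  with prime_pair_dvd_mult[OF q] consider
      "q * q' dvd f x" | "q * q' dvd prod f A"
    | "q dvd f x" "q' dvd prod f A" | "q' dvd f x" "q dvd prod f A"
    by blast
  then show ?case
  proof cases
    case 3
    then obtain x' where "x' \<in> A" "q' dvd f x'"
      using insert.hyps(1) q(2) by (auto simp: prime_dvd_prod_iff)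
    then show ?thesis
      using 3 insert.hyps(2) by (intro disjI2 bexI[of _ x] bexI[of _ x']) auto
  next
    case 4
    then obtain x' where "x' \<in> A" "q dvd f x'"
      using insert.hyps(1) q(1) by (auto simp: prime_dvd_prod_iff)
    then show ?thesis
      using 4 insert.hyps(2) by (intro disjI2 bexI[of _ x'] bexI[of _ x]) auto
  qed (use insert.IH in blast)+
qed

lemma prime_dvd_totient:
  fixes m q :: nat
  assumes "m > 0" "prime q" "q dvd totient m"
  shows "q\<^sup>2 dvd m \<or> (\<exists>p. prime p \<and> p dvd m \<and> q dvd p - 1)"
proof -
  obtain p where p: "p \<in> prime_factors m" "q dvd totient (p ^ multiplicity p m)"
    using assms by (auto simp: totient_eq_prod_prime_power_factors prime_dvd_prod_iff)
  then have "prime p" "p dvd m" "p ^ multiplicity p m dvd m"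
    by (auto simp: multiplicity_dvd)
  then show ?thesis
    using prime_dvd_totient_prime_power[OF \<open>prime p\<close> assms(2) p(2)] dvd_trans by metis
qed

(* The first alternative allows p = p', with p^2 | m; this covers q = p and q' = p. *)
lemma prime_pair_dvd_totient:
  fixes m q q' :: nat
  assumes "m > 0" and q: "prime q" "prime q'" and "q * q' dvd totient m"
  shows "(\<exists>p p'. prime p \<and> prime p' \<and> (q = p \<or> q dvd p - 1) \<and> (q' = p' \<or> q' dvd p' - 1)
             \<and> p * p' dvd m)
    \<or> (\<exists>p. prime p \<and> p dvd m \<and> q * q' dvd p - 1)"
proof -
  let ?f = "\<lambda>p. totient (p ^ multiplicity p m)"
  have "q * q' dvd prod ?f (prime_factors m)"
    using assms by (simp add: totient_eq_prod_prime_power_factors)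
  with prime_pair_dvd_prod[OF _ q] consider
      p where "p \<in> prime_factors m" "q * q' dvd ?f p"
    | p p' where "p \<in> prime_factors m" "p' \<in> prime_factors m" "p \<noteq> p'"
        "q dvd ?f p" "q' dvd ?f p'"
    by blast
  then show ?thesis
  proof cases
    case (1 p)
    then have "prime p" "p dvd m" "p ^ multiplicity p m dvd m"
      by (auto simp: multiplicity_dvd)
    then show ?thesis
      using prime_pair_dvd_totient_prime_power[OF \<open>prime p\<close> q 1(2)]
      by (metis dvd_trans power2_eq_square)
  next
    case (2 p p')
    then have "prime p" "prime p'" "p dvd m" "p' dvd m"
      by auto
    then have "p * p' dvd m"
      using \<open>p \<noteq> p'\<close> by (simp add: divides_mult primes_coprime)
    then show ?thesis
      using 2 prime_dvd_totient_prime_power[OF \<open>prime p\<close> q(1)]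
        prime_dvd_totient_prime_power[OF \<open>prime p'\<close> q(2)] by blast
  qed
qed

section \<open>Reciprocal sums over primes\<close>

lemma harm_ge_1: "n > 0 \<Longrightarrow> harm n \<ge> (1 :: real)"
  using harm_mono[of 1 n] by (simp add: harm_def)

lemma harm_le_1_plus_ln: "n > 0 \<Longrightarrow> harm n \<le> 1 + ln (real n)"
  using euler_mascheroni_sequence_decreasing[of 1 n] by (simp add: harm_def)

lemma harm_nat_floor_le_3_ln:
  fixes x :: real
  assumes "2 \<le> x"
  shows "harm (nat \<lfloor>x\<rfloor>) \<le> 3 * ln x"
proof -
  have "ln 2 \<le> ln x"
    using assms by simp
  then have "1 \<le> 2 * ln x"
    using ln2_ge_two_thirds by linarith
  have "harm (nat \<lfloor>x\<rfloor>) \<le> 1 + ln (real (nat \<lfloor>x\<rfloor>))"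
    using assms by (intro harm_le_1_plus_ln) simp
  also have "ln (real (nat \<lfloor>x\<rfloor>)) \<le> ln x"
    using assms by simp
  finally show ?thesis
    using \<open>1 \<le> 2 * ln x\<close> by linarith
qed

definition primes_1_mod :: "nat \<Rightarrow> nat \<Rightarrow> nat set" where
  "primes_1_mod N d = {p. prime p \<and> p \<le> N \<and> d dvd p - 1}"

lemma finite_primes_1_mod [simp]: "finite (primes_1_mod N d)"
  unfolding primes_1_mod_def by (rule finite_subset[of _ "{..N}"]) auto

lemma sum_inverse_primes_1_mod_le:
  assumes "d > 0"
  shows "(\<Sum>p\<in>primes_1_mod N d. 1 / real p) \<le> harm N / real d"
proof -
  have "primes_1_mod N d \<subseteq> (\<lambda>k. d * k + 1) ` {1..N}"
  proof
    fix p assume "p \<in> primes_1_mod N d"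
    then have p: "prime p" "p \<le> N" "d dvd p - 1"
      by (simp_all add: primes_1_mod_def)
    then obtain k where k: "p - 1 = d * k"
      by blast
    have "k > 0" "k \<le> d * k"
      using k prime_gt_1_nat[OF p(1)] assms by (auto intro: Nat.gr0I)
    moreover have "k \<le> N"
      using \<open>k \<le> d * k\<close> k p(2) by linarith
    ultimately show "p \<in> (\<lambda>k. d * k + 1) ` {1..N}"
      using k prime_gt_0_nat[OF p(1)] by (intro image_eqI[of _ _ k]) auto
  qed
  then have "(\<Sum>p\<in>primes_1_mod N d. 1 / real p) \<le> (\<Sum>p\<in>(\<lambda>k. d * k + 1) ` {1..N}. 1 / real p)"
    by (intro sum_mono2) simp_all
  also have "\<dots> = (\<Sum>k=1..N. 1 / real (d * k + 1))"
    using assms by (subst sum.reindex) (auto simp: inj_on_def)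
  also have "\<dots> \<le> (\<Sum>k=1..N. 1 / real k / real d)"
  proof (rule sum_mono)
    fix k assume "k \<in> {1..N}"
    then have "0 < real d * real k" "real d * real k \<le> real (d * k + 1)"
      using assms by simp_all
    then show "1 / real (d * k + 1) \<le> 1 / real k / real d"
      using frac_le[of 1 1 "real d * real k" "real (d * k + 1)"] by (simp add: mult.commute)
  qed
  also have "\<dots> = harm N / real d"
    by (simp add: harm_def inverse_eq_divide sum_divide_distrib)
  finally show ?thesis .
qed

lemma sum_inverse_insert_primes_1_mod_le:
  assumes "prime q" "N > 0"
  shows "(\<Sum>p\<in>insert q (primes_1_mod N q). 1 / real p) \<le> 2 * harm N / real q"
proof -
  have "q \<notin> primes_1_mod N q"
    using prime_not_dvd_pred[OF assms(1)] by (simp add: primes_1_mod_def)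
  then have "(\<Sum>p\<in>insert q (primes_1_mod N q). 1 / real p) \<le> 1 / real q + harm N / real q"
    using sum_inverse_primes_1_mod_le[of q N] prime_gt_0_nat[OF assms(1)] by simp
  also have "\<dots> \<le> 2 * harm N / real q"
    using harm_ge_1[OF assms(2)] by (simp add: divide_simps)
  finally show ?thesis .
qed

lemma sum_inverse_square_large_primes_le:
  assumes "y > 0"
  shows "(\<Sum>q\<in>{q. prime q \<and> y < real q \<and> q \<le> N}. 1 / (real q * real q)) \<le> harm N / y"
proof -
  let ?Q = "{q. prime q \<and> y < real q \<and> q \<le> N}"
  have "(\<Sum>q\<in>?Q. 1 / (real q * real q)) \<le> (\<Sum>q\<in>?Q. 1 / y * (1 / real q))"
    using assms by (intro sum_mono) (simp add: frac_le mult_strict_right_mono prime_gt_0_nat)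
  also have "\<dots> = 1 / y * (\<Sum>q\<in>?Q. 1 / real q)"
    by (simp add: sum_distrib_left)
  also have "(\<Sum>q\<in>?Q. 1 / real q) \<le> harm N"
    unfolding harm_def inverse_eq_divide
    by (rule sum_mono2) (auto simp: Suc_le_eq prime_gt_0_nat)
  finally show ?thesis
    using assms by (simp add: divide_right_mono)
qed

section \<open>Integers whose iterated totient has a given divisor\<close>

lemma real_card_UN_le:
  assumes "finite I"
  shows "real (card (\<Union>i\<in>I. A i)) \<le> (\<Sum>i\<in>I. real (card (A i)))"
  using card_UN_le[OF assms, of A] by (metis of_nat_le_iff of_nat_sum)

lemma card_multiples_le:
  fixes N d :: nat
  assumes "d > 0"
  shows "real (card {n\<in>{1..N}. d dvd n}) \<le> real N / real d"
proof -
  have "{n\<in>{1..N}. d dvd n} \<subseteq> (\<lambda>k. d * k) ` {1..N div d}"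
  proof
    fix n assume n: "n \<in> {n\<in>{1..N}. d dvd n}"
    then obtain k where "n = d * k" by blast
    with n assms show "n \<in> (\<lambda>k. d * k) ` {1..N div d}"
      by (auto simp: less_eq_div_iff_mult_less_eq mult.commute intro!: Suc_leI)
  qed
  then have "card {n\<in>{1..N}. d dvd n} \<le> card ((\<lambda>k. d * k) ` {1..N div d})"
    by (intro card_mono) simp_all
  also have "\<dots> \<le> N div d"
    using card_image_le[of "{1..N div d}" "\<lambda>k. d * k"] by simp
  finally have "real (card {n\<in>{1..N}. d dvd n}) \<le> real (N div d)"
    by simp
  also have "\<dots> \<le> real N / real d"
    by (rule of_nat_div_le_of_nat)
  finally show ?thesis .
qed

lemma iter_totient_0 [simp]: "iter_totient 0 n = n"
  by (simp add: iter_totient_def)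

lemma iter_totient_Suc: "iter_totient (Suc j) n = totient (iter_totient j n)"
  by (simp add: iter_totient_def)

lemma iter_totient_Suc_right: "iter_totient (Suc j) n = iter_totient j (totient n)"
  by (simp only: iter_totient_def funpow_Suc_right o_apply)

lemma iter_totient_le: "iter_totient j n \<le> n"
  by (induction j) (auto simp: iter_totient_Suc intro: le_trans[OF totient_le])

lemma iter_totient_pos: "n > 0 \<Longrightarrow> iter_totient j n > 0"
  by (induction j) (simp_all add: iter_totient_Suc)

definition iter_totient_multiples :: "nat \<Rightarrow> nat \<Rightarrow> nat \<Rightarrow> nat set" where
  "iter_totient_multiples N j d = {n\<in>{1..N}. d dvd iter_totient j n}"

lemma finite_iter_totient_multiples [simp]: "finite (iter_totient_multiples N j d)"
  by (simp add: iter_totient_multiples_def)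

lemma iter_totient_multiples_Suc_prime:
  assumes "prime q"
  shows "iter_totient_multiples N (Suc j) q
    \<subseteq> (\<Union>p\<in>insert q (primes_1_mod N q). iter_totient_multiples N j p)"
proof
  fix n assume "n \<in> iter_totient_multiples N (Suc j) q"
  then have n: "n \<in> {1..N}" "q dvd totient (iter_totient j n)"
    by (simp_all add: iter_totient_multiples_def iter_totient_Suc)
  define m where "m = iter_totient j n"
  have m: "m > 0" "m \<le> N"
    using n iter_totient_pos[of n j] iter_totient_le[of j n] by (auto simp: m_def)
  have "\<exists>p\<in>insert q (primes_1_mod N q). p dvd m"
    using prime_dvd_totient[OF m(1) assms n(2)[folded m_def]]
  proof (elim disjE exE conjE)
    assume "q\<^sup>2 dvd m"
    then show ?thesis
      by (auto simp: power2_eq_square intro: dvd_mult_left)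
  next
    fix p assume "prime p" "p dvd m" "q dvd p - 1"
    moreover have "p \<le> N"
      using dvd_imp_le[OF \<open>p dvd m\<close> m(1)] m(2) by simp
    ultimately show ?thesis
      by (auto simp: primes_1_mod_def)
  qed
  then show "n \<in> (\<Union>p\<in>insert q (primes_1_mod N q). iter_totient_multiples N j p)"
    using n(1) by (auto simp: iter_totient_multiples_def m_def)
qed

lemma iter_totient_multiples_Suc_pair:
  assumes q: "prime q" "prime q'"
  shows "iter_totient_multiples N (Suc j) (q * q')
    \<subseteq> (\<Union>(p, p')\<in>insert q (primes_1_mod N q) \<times> insert q' (primes_1_mod N q').
          iter_totient_multiples N j (p * p'))
      \<union> (\<Union>p\<in>primes_1_mod N (q * q'). iter_totient_multiples N j p)"
    (is "_ \<subseteq> ?U1 \<union> ?U2")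
proof
  fix n assume "n \<in> iter_totient_multiples N (Suc j) (q * q')"
  then have n: "n \<in> {1..N}" "q * q' dvd totient (iter_totient j n)"
    by (simp_all add: iter_totient_multiples_def iter_totient_Suc)
  define m where "m = iter_totient j n"
  have m: "m > 0" "m \<le> N"
    using n iter_totient_pos[of n j] iter_totient_le[of j n] by (auto simp: m_def)
  have le_N: "p \<le> N" if "p dvd m" for p
    using dvd_imp_le[OF that m(1)] m(2) by simp
  have mem: "n \<in> iter_totient_multiples N j e" if "e dvd m" for e
    using n(1) that by (simp add: iter_totient_multiples_def m_def)
  from prime_pair_dvd_totient[OF m(1) q n(2)[folded m_def]] consider
      p p' where "prime p" "prime p'" "q = p \<or> q dvd p - 1" "q' = p' \<or> q' dvd p' - 1"
        "p * p' dvd m"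
    | p where "prime p" "p dvd m" "q * q' dvd p - 1"
    by blast
  then show "n \<in> ?U1 \<union> ?U2"
  proof cases
    case (1 p p')
    moreover have "p \<le> N" "p' \<le> N"
      using le_N dvd_mult_left dvd_mult_right \<open>p * p' dvd m\<close> by metis+
    ultimately have "(p, p') \<in> insert q (primes_1_mod N q) \<times> insert q' (primes_1_mod N q')"
      by (auto simp: primes_1_mod_def)
    then show ?thesis
      using mem[OF \<open>p * p' dvd m\<close>] by (intro UnI1 UN_I[of "(p, p')"]) simp_all
  next
    case (2 p)
    then have "p \<in> primes_1_mod N (q * q')"
      using le_N by (simp add: primes_1_mod_def)
    then show ?thesis
      using mem[OF \<open>p dvd m\<close>] by (intro UnI2 UN_I)
  qed
qed

lemma card_iter_totient_multiples_prime:
  assumes "prime q" "N > 0"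
  shows "real (card (iter_totient_multiples N j q)) \<le> (2 * harm N) ^ j * real N / real q"
  using assms(1)
proof (induction j arbitrary: q)
  case 0
  then show ?case
    using card_multiples_le[of q N] by (simp add: iter_totient_multiples_def prime_gt_0_nat)
next
  case (Suc j)
  let ?S = "insert q (primes_1_mod N q)"
  let ?c = "(2 * harm N) ^ j * real N"
  have "real (card (iter_totient_multiples N (Suc j) q))
      \<le> real (card (\<Union>p\<in>?S. iter_totient_multiples N j p))"
    using iter_totient_multiples_Suc_prime[OF Suc.prems] by (intro of_nat_mono card_mono) auto
  also have "\<dots> \<le> (\<Sum>p\<in>?S. real (card (iter_totient_multiples N j p)))"
    by (intro real_card_UN_le) simp
  also have "\<dots> \<le> (\<Sum>p\<in>?S. ?c * (1 / real p))"
    using Suc.IH Suc.prems by (intro sum_mono) (auto simp: primes_1_mod_def)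
  also have "\<dots> = ?c * (\<Sum>p\<in>?S. 1 / real p)"
    by (simp add: sum_distrib_left)
  also have "\<dots> \<le> ?c * (2 * harm N / real q)"
    using sum_inverse_insert_primes_1_mod_le[OF Suc.prems assms(2)]
    by (intro mult_left_mono) (simp_all add: harm_nonneg)
  finally show ?case
    by (simp add: mult_ac)
qed

lemma card_UN_iter_totient_multiples_primes_1_mod_le:
  assumes "d > 0" "N > 0"
  shows "real (card (\<Union>p\<in>primes_1_mod N d. iter_totient_multiples N j p))
    \<le> (2 * harm N) ^ j * real N * (harm N / real d)"
proof -
  define a where "a = (2 * harm N) ^ j * real N"
  have "a \<ge> 0"
    by (simp add: a_def harm_nonneg)
  have "real (card (\<Union>p\<in>primes_1_mod N d. iter_totient_multiples N j p))
      \<le> (\<Sum>p\<in>primes_1_mod N d. real (card (iter_totient_multiples N j p)))"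
    by (intro real_card_UN_le) simp
  also have "\<dots> \<le> (\<Sum>p\<in>primes_1_mod N d. a * (1 / real p))"
    using card_iter_totient_multiples_prime[OF _ assms(2)]
    by (intro sum_mono) (simp add: a_def primes_1_mod_def)
  also have "\<dots> = a * (\<Sum>p\<in>primes_1_mod N d. 1 / real p)"
    by (simp add: sum_distrib_left)
  also have "\<dots> \<le> a * (harm N / real d)"
    using sum_inverse_primes_1_mod_le[OF assms(1)] \<open>a \<ge> 0\<close> by (rule mult_left_mono)
  finally show ?thesis
    by (simp add: a_def)
qed

lemma card_UN_iter_totient_multiples_sources_le:
  assumes q: "prime q" "prime q'" and "N > 0" "c \<ge> 0"
    and bound: "\<And>p p'. prime p \<Longrightarrow> prime p' \<Longrightarrow>
      real (card (iter_totient_multiples N j (p * p'))) \<le> c / (real p * real p')"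
  shows "real (card (\<Union>(p, p')\<in>insert q (primes_1_mod N q) \<times> insert q' (primes_1_mod N q').
      iter_totient_multiples N j (p * p')))
    \<le> c * (4 * (harm N)\<^sup>2 / (real q * real q'))"
proof -
  let ?S = "\<lambda>q. insert q (primes_1_mod N q)"
  have "real (card (\<Union>(p, p')\<in>?S q \<times> ?S q'. iter_totient_multiples N j (p * p')))
      \<le> (\<Sum>(p, p')\<in>?S q \<times> ?S q'. real (card (iter_totient_multiples N j (p * p'))))"
    using real_card_UN_le[of "?S q \<times> ?S q'" "\<lambda>(p, p'). iter_totient_multiples N j (p * p')"]
    by (simp add: split_def)
  also have "\<dots> \<le> (\<Sum>(p, p')\<in>?S q \<times> ?S q'. c * (1 / real p * (1 / real p')))"
    using bound q by (intro sum_mono) (auto simp: primes_1_mod_def)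
  also have "\<dots> = c * ((\<Sum>p\<in>?S q. 1 / real p) * (\<Sum>p'\<in>?S q'. 1 / real p'))"
    by (subst sum_product) (simp add: sum_distrib_left sum.cartesian_product split_def)
  also have "\<dots> \<le> c * ((2 * harm N / real q) * (2 * harm N / real q'))"
    using sum_inverse_insert_primes_1_mod_le[OF _ assms(3)] q \<open>c \<ge> 0\<close>
    by (intro mult_left_mono mult_mono) (auto simp: harm_nonneg intro: sum_nonneg)
  finally show ?thesis
    by (simp add: power2_eq_square)
qed

lemma card_iter_totient_multiples_pair:
  assumes q: "prime q" "prime q'" and "N > 0"
  shows "real (card (iter_totient_multiples N j (q * q')))
    \<le> (5 * (harm N)\<^sup>2) ^ j * real N / (real q * real q')"
  using q
proof (induction j arbitrary: q q')
  case 0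
  then show ?case
    using card_multiples_le[of "q * q'" N] by (simp add: iter_totient_multiples_def prime_gt_0_nat)
next
  case (Suc j)
  define H :: real where "H = harm N"
  define a where "a = (2 * H) ^ j * real N"
  define c where "c = (5 * H\<^sup>2) ^ j * real N"
  let ?U1 = "\<Union>(p, p')\<in>insert q (primes_1_mod N q) \<times> insert q' (primes_1_mod N q').
    iter_totient_multiples N j (p * p')"
  let ?U2 = "\<Union>p\<in>primes_1_mod N (q * q'). iter_totient_multiples N j p"
  have H: "H \<ge> 1"
    using harm_ge_1[OF assms(3)] by (simp add: H_def)
  have "a * H \<le> c * H\<^sup>2"
  proof (intro mult_mono)
    show "a \<le> c"
      unfolding a_def c_def using H
      by (intro mult_right_mono power_mono) (simp_all add: power2_eq_square)
    show "H \<le> H\<^sup>2"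
      using H by (simp add: power2_eq_square)
  qed (use H in \<open>simp_all add: c_def\<close>)
  have "real (card (iter_totient_multiples N (Suc j) (q * q'))) \<le> real (card (?U1 \<union> ?U2))"
    using iter_totient_multiples_Suc_pair[OF Suc.prems] by (intro of_nat_mono card_mono) auto
  also have "\<dots> \<le> real (card ?U1) + real (card ?U2)"
    using card_Un_le[of ?U1 ?U2] by linarith
  also have "\<dots> \<le> c * (4 * H\<^sup>2 / (real q * real q')) + a * (H / (real q * real q'))"
  proof (rule add_mono)
    show "real (card ?U1) \<le> c * (4 * H\<^sup>2 / (real q * real q'))"
      using card_UN_iter_totient_multiples_sources_le[OF Suc.prems assms(3)] Suc.IH H
      by (simp add: c_def H_def)
    show "real (card ?U2) \<le> a * (H / (real q * real q'))"
      using card_UN_iter_totient_multiples_primes_1_mod_le[of "q * q'" N j] Suc.prems assms(3)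
      by (simp add: a_def H_def prime_gt_0_nat)
  qed
  also have "\<dots> = (4 * H\<^sup>2 * c + a * H) / (real q * real q')"
    by (simp add: add_divide_distrib mult_ac)
  also have "\<dots> \<le> 5 * H\<^sup>2 * c / (real q * real q')"
    using \<open>a * H \<le> c * H\<^sup>2\<close> by (intro divide_right_mono) simp_all
  finally show ?case
    by (simp add: c_def H_def mult_ac)
qed

lemma card_iter_totient_multiples_large_squares_le:
  assumes "y > 0" "N > 0"
  shows "real (card (\<Union>q\<in>{q. prime q \<and> y < real q \<and> q \<le> N}. iter_totient_multiples N i (q * q)))
    \<le> (5 * (harm N)\<^sup>2) ^ Suc i * real N / y"
proof -
  define H :: real where "H = harm N"
  define Q where "Q = {q. prime q \<and> y < real q \<and> q \<le> N}"
  have "finite Q"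
    by (rule finite_subset[of _ "{..N}"]) (auto simp: Q_def)
  have "H \<ge> 1"
    using harm_ge_1[OF assms(2)] by (simp add: H_def)
  have "real (card (\<Union>q\<in>Q. iter_totient_multiples N i (q * q)))
      \<le> (\<Sum>q\<in>Q. real (card (iter_totient_multiples N i (q * q))))"
    using \<open>finite Q\<close> by (rule real_card_UN_le)
  also have "\<dots> \<le> (\<Sum>q\<in>Q. (5 * H\<^sup>2) ^ i * real N * (1 / (real q * real q)))"
    using card_iter_totient_multiples_pair[OF _ _ assms(2)]
    by (intro sum_mono) (simp add: H_def Q_def)
  also have "\<dots> = (5 * H\<^sup>2) ^ i * real N * (\<Sum>q\<in>Q. 1 / (real q * real q))"
    by (simp add: sum_distrib_left)
  also have "\<dots> \<le> (5 * H\<^sup>2) ^ i * real N * (H / y)"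
    using sum_inverse_square_large_primes_le[OF assms(1)] \<open>H \<ge> 1\<close>
    by (intro mult_left_mono) (simp_all add: H_def Q_def)
  also have "\<dots> \<le> (5 * H\<^sup>2) ^ i * real N * (5 * H\<^sup>2 / y)"
    using \<open>H \<ge> 1\<close> assms(1)
    by (intro mult_left_mono divide_right_mono) (simp_all add: power2_eq_square)
  finally show ?thesis
    by (simp add: H_def Q_def mult_ac)
qed

section \<open>Comparing the two counts\<close>

definition Phi_set :: "nat \<Rightarrow> real \<Rightarrow> real \<Rightarrow> nat set" where
  "Phi_set k x y = {n. 1 \<le> n \<and> real n \<le> x \<and>
      (\<forall>p. prime p \<and> p dvd iter_totient k n \<longrightarrow> real p \<le> y)}"

definition Psi_set :: "real \<Rightarrow> nat set \<Rightarrow> nat set" where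
  "Psi_set x P = {n. 1 \<le> n \<and> real n \<le> x \<and> (\<forall>p. prime p \<and> p dvd n \<longrightarrow> p \<in> P)}"

lemma Phi_count_eq_card: "Phi_count k x y = card (Phi_set k x y)"
  by (simp add: Phi_count_def Phi_set_def)

lemma Psi_count_eq_card: "Psi_count x P = card (Psi_set x P)"
  by (simp add: Psi_count_def Psi_set_def)

lemma Psi_set_subset_atLeastAtMost: "Psi_set x P \<subseteq> {1..nat \<lfloor>x\<rfloor>}"
  by (auto simp: Psi_set_def intro: le_nat_floor)

lemma finite_Psi_set [simp]: "finite (Psi_set x P)"
  using Psi_set_subset_atLeastAtMost by (rule finite_subset) simp

lemma prime_dvd_in_P_set_if_smooth:
  assumes "n > 0" "real n \<le> x" "\<forall>p. prime p \<and> p dvd iter_totient j n \<longrightarrow> real p \<le> y"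
    and "prime p" "p dvd n"
  shows "p \<in> P_set x y j"
  using assms
proof (induction j arbitrary: n p)
  case 0
  then show ?case
    by simp
next
  case (Suc j)
  have "real p \<le> x"
    using dvd_imp_le[OF Suc.prems(5,1)] Suc.prems(2) by linarith
  moreover have "q \<in> P_set x y j" if "prime q" "q dvd p - 1" for q
  proof (rule Suc.IH)
    have "p - 1 dvd totient n"
      using totient_dvd[OF Suc.prems(5)] totient_prime[OF Suc.prems(4)] by simp
    then show "q dvd totient n"
      using that(2) dvd_trans by blast
    show "real (totient n) \<le> x"
      using totient_le[of n] Suc.prems(2) by linarith
  qed (use that Suc.prems in \<open>simp_all add: iter_totient_Suc_right\<close>)
  ultimately show ?case
    using Suc.prems(4) by simp
qed

lemma Phi_set_subset_Psi_set: "Phi_set k x y \<subseteq> Psi_set x (P_set x y k)"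
proof
  fix n assume "n \<in> Phi_set k x y"
  then show "n \<in> Psi_set x (P_set x y k)"
    using prime_dvd_in_P_set_if_smooth[of n x k y] by (simp add: Phi_set_def Psi_set_def)
qed

lemma abs_Phi_count_diff_Psi_count:
  "\<bar>real (Phi_count k x y) - real (Psi_count x (P_set x y k))\<bar>
    = real (card (Psi_set x (P_set x y k) - Phi_set k x y))"
proof -
  have sub: "Phi_set k x y \<subseteq> Psi_set x (P_set x y k)"
    by (rule Phi_set_subset_Psi_set)
  then have "card (Phi_set k x y) \<le> card (Psi_set x (P_set x y k))"
    by (intro card_mono) simp_all
  moreover have "card (Psi_set x (P_set x y k) - Phi_set k x y)
      = card (Psi_set x (P_set x y k)) - card (Phi_set k x y)"
    using sub by (intro card_Diff_subset) (auto intro: finite_subset)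
  ultimately show ?thesis
    by (simp add: Phi_count_eq_card Psi_count_eq_card of_nat_diff)
qed

lemma small_prime_in_P_set:
  assumes "y \<le> x" "prime q" "real q \<le> y"
  shows "q \<in> P_set x y k"
  using assms(2,3)
proof (induction k arbitrary: q)
  case 0
  then show ?case
    by simp
next
  case (Suc k)
  have "r \<in> P_set x y k" if "prime r" "r dvd q - 1" for r
  proof (rule Suc.IH[OF \<open>prime r\<close>])
    have "r \<le> q - 1"
      using dvd_imp_le[OF that(2)] prime_gt_1_nat[OF Suc.prems(1)] by simp
    then show "real r \<le> y"
      using Suc.prems(2) by linarith
  qed
  then show ?case
    using Suc.prems assms(1) by simp
qed

lemma smooth_iter_totient_if_no_large_square:
  assumes "y \<le> x" "n > 0" "\<forall>p. prime p \<and> p dvd n \<longrightarrow> p \<in> P_set x y k"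
    and "\<forall>i<k. \<forall>q. prime q \<and> q\<^sup>2 dvd iter_totient i n \<longrightarrow> real q \<le> y"
    and "prime p" "p dvd iter_totient k n"
  shows "real p \<le> y"
  using assms(2-)
proof (induction k arbitrary: n)
  case 0
  then show ?case
    by simp
next
  case (Suc k)
  have factors: "\<forall>q. prime q \<and> q dvd totient n \<longrightarrow> q \<in> P_set x y k"
  proof (intro allI impI, elim conjE)
    fix q assume q: "prime q" "q dvd totient n"
    from prime_dvd_totient[OF Suc.prems(1) q] show "q \<in> P_set x y k"
    proof (elim disjE exE conjE)
      assume "q\<^sup>2 dvd n"
      then have "real q \<le> y"
        using Suc.prems(3) q(1) by (metis iter_totient_0 zero_less_Suc)
      then show ?thesis
        using small_prime_in_P_set[OF assms(1) q(1)] by blast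
    next
      fix p' assume "prime p'" "p' dvd n" "q dvd p' - 1"
      then show ?thesis
        using Suc.prems(2) q(1) by auto
    qed
  qed
  have squares: "\<forall>i<k. \<forall>q. prime q \<and> q\<^sup>2 dvd iter_totient i (totient n) \<longrightarrow> real q \<le> y"
    using Suc.prems(3) by (metis Suc_mono iter_totient_Suc_right)
  show ?case
    using Suc.IH[OF _ factors squares] Suc.prems(1,4,5) by (simp add: iter_totient_Suc_right)
qed

lemma Psi_set_diff_Phi_set_subset:
  assumes "y \<le> x"
  shows "Psi_set x (P_set x y k) - Phi_set k x y
    \<subseteq> (\<Union>i<k. \<Union>q\<in>{q. prime q \<and> y < real q \<and> q \<le> nat \<lfloor>x\<rfloor>}.
          iter_totient_multiples (nat \<lfloor>x\<rfloor>) i (q * q))"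
proof
  fix n assume n: "n \<in> Psi_set x (P_set x y k) - Phi_set k x y"
  then have "n \<in> {1..nat \<lfloor>x\<rfloor>}"
    using Psi_set_subset_atLeastAtMost by blast
  have "\<not> (\<forall>i<k. \<forall>q. prime q \<and> q\<^sup>2 dvd iter_totient i n \<longrightarrow> real q \<le> y)"
    using n smooth_iter_totient_if_no_large_square[OF assms, where n = n and k = k]
    by (auto simp: Psi_set_def Phi_set_def) blast
  then obtain i q where iq: "i < k" "prime q" "q\<^sup>2 dvd iter_totient i n" "y < real q"
    by (auto simp: not_le)
  have "q \<le> q\<^sup>2"
    by (simp add: power2_eq_square)
  also have "\<dots> \<le> iter_totient i n"
    using dvd_imp_le[OF iq(3)] iter_totient_pos \<open>n \<in> {1..nat \<lfloor>x\<rfloor>}\<close> by simp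
  also have "\<dots> \<le> nat \<lfloor>x\<rfloor>"
    using iter_totient_le[of i n] \<open>n \<in> {1..nat \<lfloor>x\<rfloor>}\<close> by simp
  finally show "n \<in> (\<Union>i<k. \<Union>q\<in>{q. prime q \<and> y < real q \<and> q \<le> nat \<lfloor>x\<rfloor>}.
          iter_totient_multiples (nat \<lfloor>x\<rfloor>) i (q * q))"
    using iq \<open>n \<in> {1..nat \<lfloor>x\<rfloor>}\<close>
    by (auto simp: iter_totient_multiples_def power2_eq_square)
qed

lemma card_Psi_set_diff_Phi_set_le:
  assumes "1 \<le> y" "y \<le> x"
  shows "real (card (Psi_set x (P_set x y k) - Phi_set k x y))
    \<le> real k * (5 * (harm (nat \<lfloor>x\<rfloor>))\<^sup>2) ^ k * x / y"
proof -
  define N where "N = nat \<lfloor>x\<rfloor>"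
  define c :: real where "c = 5 * (harm N)\<^sup>2"
  let ?U = "\<lambda>i. \<Union>q\<in>{q. prime q \<and> y < real q \<and> q \<le> N}. iter_totient_multiples N i (q * q)"
  have "N > 0" "real N \<le> x"
    using assms by (simp_all add: N_def)
  have "c \<ge> 1"
    using one_le_power[OF harm_ge_1[OF \<open>N > 0\<close>], of 2] by (simp add: c_def)
  have "real (card (Psi_set x (P_set x y k) - Phi_set k x y)) \<le> real (card (\<Union>i<k. ?U i))"
    using Psi_set_diff_Phi_set_subset[OF assms(2), of k]
    by (intro of_nat_mono card_mono) (simp_all add: N_def)
  also have "\<dots> \<le> (\<Sum>i<k. real (card (?U i)))"
    by (rule real_card_UN_le) simp
  also have "\<dots> \<le> (\<Sum>i<k. c ^ k * x / y)"
  proof (rule sum_mono)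
    fix i assume "i \<in> {..<k}"
    have "real (card (?U i)) \<le> c ^ Suc i * real N / y"
      using card_iter_totient_multiples_large_squares_le[of y N i] assms \<open>N > 0\<close>
      by (simp add: c_def)
    also have "\<dots> \<le> c ^ k * x / y"
      using \<open>c \<ge> 1\<close> \<open>i \<in> {..<k}\<close> \<open>real N \<le> x\<close> assms(1)
      by (intro divide_right_mono mult_mono power_increasing) simp_all
    finally show "real (card (?U i)) \<le> c ^ k * x / y" .
  qed
  also have "\<dots> = real k * c ^ k * x / y"
    by simp
  finally show ?thesis
    by (simp add: c_def N_def)
qed

theorem proposition1:
  fixes k :: nat
  shows "\<exists>C. \<forall>x y :: real. 2 \<le> y \<and> y \<le> x \<longrightarrow>
           \<bar>real (Phi_count k x y) - real (Psi_count x (P_set x y k))\<bar>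
             \<le> C * x * (ln x) ^ (2 * k) / y"
proof (intro exI[of _ "real k * 45 ^ k"] allI impI, elim conjE)
  fix x y :: real
  assume y: "2 \<le> y" "y \<le> x"
  define H :: real where "H = harm (nat \<lfloor>x\<rfloor>)"
  have "H\<^sup>2 \<le> (3 * ln x)\<^sup>2"
    using harm_nat_floor_le_3_ln[of x] harm_nonneg[of "nat \<lfloor>x\<rfloor>"] y
    by (intro power_mono) (simp_all add: H_def)
  then have "(5 * H\<^sup>2) ^ k \<le> (45 * (ln x)\<^sup>2) ^ k"
    by (intro power_mono) (simp_all add: power_mult_distrib)
  have "\<bar>real (Phi_count k x y) - real (Psi_count x (P_set x y k))\<bar>
      = real (card (Psi_set x (P_set x y k) - Phi_set k x y))"
    by (rule abs_Phi_count_diff_Psi_count)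
  also have "\<dots> \<le> real k * (5 * H\<^sup>2) ^ k * x / y"
    using card_Psi_set_diff_Phi_set_le[of y x k] y by (simp add: H_def)
  also have "\<dots> \<le> real k * (45 * (ln x)\<^sup>2) ^ k * x / y"
    using \<open>(5 * H\<^sup>2) ^ k \<le> (45 * (ln x)\<^sup>2) ^ k\<close> y
    by (intro divide_right_mono mult_right_mono mult_left_mono) simp_all
  also have "\<dots> = real k * 45 ^ k * x * ln x ^ (2 * k) / y"
    unfolding power_mult power_mult_distrib by (simp add: mult_ac)
  finally show "\<bar>real (Phi_count k x y) - real (Psi_count x (P_set x y k))\<bar>
      \<le> real k * 45 ^ k * x * ln x ^ (2 * k) / y" .
qed

end
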